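(* Let $\Phi$ be an $e$-dimensional formal group law over $k$, $m\in\mathbb N_{>0}\cup\{\infty\}$, and let $(K,\mathbb D)$ be a $\Phi[m]$-field. Then $[K:C_K]\le p^e$.
   Context: $k$ is a field of characteristic $p>0$. For a $k$-algebra $R$, $R[\bar v]:=R[X_1,\dots,X_e]/(X_1^{p^m},\dots,X_e^{p^m})$ ($R[[\bar X]]$ if $m=\infty$); $\bar w$ is a second $e$-tuple of $m$-truncated variables. $\Phi[m]\in(k[\bar v,\bar w])^e$ denotes the image of $\Phi(\bar X,\bar Y)$ under $X_i\mapsto v_i$, $Y_i\mapsto w_i$ ($\Phi[\infty]=\Phi$). An $m$-truncated $e$-dimensional HS-derivation on $R$ over $k$ is a family $(D_{\mathbf i}:R\to R)_{\mathbf i\in\{0,\dots,p^m-1\}^e}$ such that $r\mapsto\sum D_{\mathbf i}(r)\bar v^{\mathbf i}$ is a $k$-algebra homomorphism $R\to R[\bar v]$ with $D_{\mathbf 0}=\mathrm{id}$. For $F\in(k[\bar v,\bar w])^e$ it is an $F$-derivation if $\sum_{\mathbf i,\mathbf j}D_{\mathbf j}(D_{\mathbf i}(r))\bar v^{\mathbf i}\bar w^{\mathbf j}=\sum_{\mathbf i}D_{\mathbf i}(r)F(\bar v,\bar w)^{\mathbf i}$ for all $r$. An $F$-field is a field $K\supseteq k$ with an $F$-derivation $\mathbb D$. The field of constants is $C_K:=\bigcap_{l=1}^e\ker D_{\varepsilon_l}$, $\varepsilon_l$ the $l$-th unit vector. *)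

theory Defs
  imports Complex_Main "HOL-Library.Extended_Nat" "HOL-Computational_Algebra.Primes"
begin

text \<open>A multi-index is a function nat => nat; a power series in the variables
  indexed by {..<n} is a coefficient function on multi-indices (coefficients at
  multi-indices using variables outside {..<n} are required to vanish, see is_mps).\<close>

type_synonym 'a mps = "(nat \<Rightarrow> nat) \<Rightarrow> 'a"

definition msupp_in :: "nat \<Rightarrow> (nat \<Rightarrow> nat) \<Rightarrow> bool" where
  "msupp_in n a \<longleftrightarrow> (\<forall>l. n \<le> l \<longrightarrow> a l = 0)"

definition is_mps :: "nat \<Rightarrow> 'a::zero mps \<Rightarrow> bool" where
  "is_mps n f \<longleftrightarrow> (\<forall>a. \<not> msupp_in n a \<longrightarrow> f a = 0)"

definition tdeg :: "nat \<Rightarrow> (nat \<Rightarrow> nat) \<Rightarrow> nat" where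
  "tdeg n a = (\<Sum>l<n. a l)"

definition ps_one :: "'a::comm_ring_1 mps" where
  "ps_one = (\<lambda>a. if a = (\<lambda>_. 0) then 1 else 0)"

definition ps_var :: "nat \<Rightarrow> 'a::comm_ring_1 mps" where
  "ps_var i = (\<lambda>a. if a = (\<lambda>l. if l = i then 1 else 0) then 1 else 0)"

definition ps_add :: "'a::comm_ring_1 mps \<Rightarrow> 'a mps \<Rightarrow> 'a mps" where
  "ps_add f g = (\<lambda>a. f a + g a)"

definition ps_mult :: "'a::comm_ring_1 mps \<Rightarrow> 'a mps \<Rightarrow> 'a mps" where
  "ps_mult f g = (\<lambda>a. \<Sum>b\<in>{b. \<forall>l. b l \<le> a l}. f b * g (\<lambda>l. a l - b l))"

definition ps_pow :: "'a::comm_ring_1 mps \<Rightarrow> nat \<Rightarrow> 'a mps" where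
  "ps_pow f n = ((ps_mult f) ^^ n) ps_one"

fun ps_monprod :: "nat \<Rightarrow> (nat \<Rightarrow> 'a::comm_ring_1 mps) \<Rightarrow> (nat \<Rightarrow> nat) \<Rightarrow> 'a mps" where
  "ps_monprod 0 g i = ps_one"
| "ps_monprod (Suc n) g i = ps_mult (ps_monprod n g i) (ps_pow (g n) (i n))"

text \<open>Substitution f(g_0,...,g_(n-1)) of series g_j (zero constant term) into a
  series f in n variables: the coefficientwise (locally finite) sum of f_i * g^i.\<close>
definition ps_subst :: "nat \<Rightarrow> 'a::comm_ring_1 mps \<Rightarrow> (nat \<Rightarrow> 'a mps) \<Rightarrow> 'a mps" where
  "ps_subst n f g = (\<lambda>a. \<Sum>i\<in>{i. msupp_in n i \<and> f i * ps_monprod n g i a \<noteq> 0}.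
       f i * ps_monprod n g i a)"

definition is_subfield :: "'a::field set \<Rightarrow> bool" where
  "is_subfield k \<longleftrightarrow> 0 \<in> k \<and> 1 \<in> k \<and> (\<forall>x\<in>k. \<forall>y\<in>k. x + y \<in> k \<and> x * y \<in> k)
     \<and> (\<forall>x\<in>k. - x \<in> k \<and> inverse x \<in> k)"

text \<open>An e-dimensional formal group law over k: Phi_0..Phi_(e-1) in k[[X,Y]], where
  X_l is the variable l and Y_l the variable e+l; Phi(X,Y) = X + Y mod degree 2,
  and Phi(Phi(X,Y),Z) = Phi(X,Phi(Y,Z)) (Z_l is variable 2e+l).\<close>
definition formal_group_law :: "'a::field set \<Rightarrow> nat \<Rightarrow> (nat \<Rightarrow> 'a mps) \<Rightarrow> bool" where
  "formal_group_law k e \<Phi> \<longleftrightarrow>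
     (\<forall>l<e. is_mps (2*e) (\<Phi> l) \<and> (\<forall>a. \<Phi> l a \<in> k)) \<and>
     (\<forall>l<e. \<forall>a. msupp_in (2*e) a \<and> tdeg (2*e) a \<le> 1 \<longrightarrow>
          \<Phi> l a = ps_add (ps_var l) (ps_var (e+l)) a) \<and>
     (\<forall>l<e. \<forall>a. msupp_in (3*e) a \<longrightarrow>
          ps_subst (2*e) (\<Phi> l) (\<lambda>j. if j < e then \<Phi> j else ps_var (e+j)) a =
          ps_subst (2*e) (\<Phi> l) (\<lambda>j. if j < e then ps_var j
                 else ps_subst (2*e) (\<Phi> (j-e)) (\<lambda>t. ps_var (e+t))) a)"

definition below :: "nat \<Rightarrow> enat \<Rightarrow> nat \<Rightarrow> bool" where
  "below p m n = (case m of enat m' \<Rightarrow> n < p ^ m' | \<infinity> \<Rightarrow> True)"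

text \<open>multi-indices of the monomials surviving in R[X_0..X_(n-1)]/(X_l^(p^m))\<close>
definition trunc_idx :: "nat \<Rightarrow> enat \<Rightarrow> nat \<Rightarrow> (nat \<Rightarrow> nat) \<Rightarrow> bool" where
  "trunc_idx p m n a \<longleftrightarrow> msupp_in n a \<and> (\<forall>l<n. below p m (a l))"

definition ps_trunc :: "nat \<Rightarrow> enat \<Rightarrow> nat \<Rightarrow> 'a::comm_ring_1 mps \<Rightarrow> 'a mps" where
  "ps_trunc p m n f = (\<lambda>a. if trunc_idx p m n a then f a else 0)"

definition tmult :: "nat \<Rightarrow> enat \<Rightarrow> nat \<Rightarrow> 'a::comm_ring_1 mps \<Rightarrow> 'a mps \<Rightarrow> 'a mps" where
  "tmult p m n f g = ps_trunc p m n (ps_mult f g)"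

definition tpow :: "nat \<Rightarrow> enat \<Rightarrow> nat \<Rightarrow> 'a::comm_ring_1 mps \<Rightarrow> nat \<Rightarrow> 'a mps" where
  "tpow p m n f d = ((tmult p m n f) ^^ d) (ps_trunc p m n ps_one)"

fun tmonprod :: "nat \<Rightarrow> enat \<Rightarrow> nat \<Rightarrow> nat \<Rightarrow> (nat \<Rightarrow> 'a::comm_ring_1 mps) \<Rightarrow> (nat \<Rightarrow> nat) \<Rightarrow> 'a mps" where
  "tmonprod p m N 0 F t = ps_trunc p m N ps_one"
| "tmonprod p m N (Suc n) F t = tmult p m N (tmonprod p m N n F t) (tpow p m N (F n) (t n))"

definition Phi_trunc :: "nat \<Rightarrow> enat \<Rightarrow> nat \<Rightarrow> (nat \<Rightarrow> 'a::comm_ring_1 mps) \<Rightarrow> nat \<Rightarrow> 'a mps" where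
  "Phi_trunc p m e \<Phi> = (\<lambda>l. ps_trunc p m (2*e) (\<Phi> l))"

text \<open>m-truncated e-dimensional HS-derivation on the field (type) 'a over k:
  r \<mapsto> sum_i D_i(r) v^i is a k-algebra homomorphism into 'a[v], and D_0 = id.\<close>
definition hs_derivation :: "nat \<Rightarrow> enat \<Rightarrow> nat \<Rightarrow> 'a::field set \<Rightarrow> ((nat \<Rightarrow> nat) \<Rightarrow> 'a \<Rightarrow> 'a) \<Rightarrow> bool" where
  "hs_derivation p m e k D \<longleftrightarrow>
     (\<forall>r. D (\<lambda>_. 0) r = r) \<and>
     (\<forall>a. trunc_idx p m e a \<longrightarrow>
        (\<forall>r s. D a (r + s) = D a r + D a s \<and>
               D a (r * s) = (\<Sum>b\<in>{b. \<forall>l. b l \<le> a l}. D b r * D (\<lambda>l. a l - b l) s)) \<and>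
        (\<forall>c\<in>k. D a c = (if a = (\<lambda>_. 0) then c else 0)))"

text \<open>the monomial v^i w^j in the 2e variables v_0..v_(e-1), w_0..w_(e-1)\<close>
definition join_idx :: "nat \<Rightarrow> (nat \<Rightarrow> nat) \<Rightarrow> (nat \<Rightarrow> nat) \<Rightarrow> nat \<Rightarrow> nat" where
  "join_idx e i j = (\<lambda>l. if l < e then i l else j (l - e))"

text \<open>F-derivation: sum_(i,j) D_j(D_i r) v^i w^j = sum_t D_t(r) F(v,w)^t, compared
  coefficientwise (the right-hand side as a locally finite sum).\<close>
definition F_derivation :: "nat \<Rightarrow> enat \<Rightarrow> nat \<Rightarrow> (nat \<Rightarrow> 'a::field mps) \<Rightarrow> ((nat \<Rightarrow> nat) \<Rightarrow> 'a \<Rightarrow> 'a) \<Rightarrow> bool" where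
  "F_derivation p m e F D \<longleftrightarrow>
     (\<forall>r i j. trunc_idx p m e i \<longrightarrow> trunc_idx p m e j \<longrightarrow>
        D j (D i r) =
          (\<Sum>t\<in>{t. trunc_idx p m e t \<and> D t r * tmonprod p m (2*e) e F t (join_idx e i j) \<noteq> 0}.
              D t r * tmonprod p m (2*e) e F t (join_idx e i j)))"

definition constants :: "nat \<Rightarrow> ((nat \<Rightarrow> nat) \<Rightarrow> 'a \<Rightarrow> 'a::field) \<Rightarrow> 'a set" where
  "constants e D = {r. \<forall>l<e. D (\<lambda>t. if t = l then 1 else 0) r = 0}"

definition lin_indep_over :: "'a::field set \<Rightarrow> 'a set \<Rightarrow> bool" where
  "lin_indep_over C B \<longleftrightarrow> finite B \<and>
     (\<forall>c. (\<forall>b\<in>B. c b \<in> C) \<and> (\<Sum>b\<in>B. c b * b) = 0 \<longrightarrow> (\<forall>b\<in>B. c b = 0))"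

definition spans_over :: "'a::field set \<Rightarrow> 'a set \<Rightarrow> bool" where
  "spans_over C B \<longleftrightarrow> (\<forall>x. \<exists>c. (\<forall>b\<in>B. c b \<in> C) \<and> x = (\<Sum>b\<in>B. c b * b))"

definition field_degree_le :: "'a::field set \<Rightarrow> nat \<Rightarrow> bool" where
  "field_degree_le C n \<longleftrightarrow> (\<exists>B. lin_indep_over C B \<and> spans_over C B \<and> card B \<le> n)"

end

theory Submission
  imports Defs "HOL-Library.FuncSet"
begin

text \<open>The maps \<open>D\<^sub>\<epsilon>\<^sub>l\<close> are derivations whose common kernel is \<open>C\<^sub>K\<close>. Reading the
  \<open>\<Phi>[m]\<close>-derivation identity at the monomials \<open>v\<^sup>i w\<^sub>l\<close> expresses \<open>D\<^sub>\<epsilon>\<^sub>l \<circ> D\<^sub>i\<close> as a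
  \<open>K\<close>-linear combination of the \<open>D\<^sub>t\<close>. Since \<open>\<Phi>\<close> has no constant term and all formal partial
  derivatives of \<open>\<Phi>\<^sub>s\<^sup>p\<close> vanish in characteristic \<open>p\<close>, no monomial of \<open>\<Phi>\<^sub>s\<^sup>p\<close> has all exponents
  below \<open>p\<close>; so only the at most \<open>p\<^sup>e\<close> maps \<open>D\<^sub>t\<close> with all \<open>t\<^sub>s < p\<close> occur, among them
  \<open>D\<^sub>0 = id\<close>, and their span is stable under the derivations.

  If \<open>B\<close> were \<open>C\<^sub>K\<close>-linearly independent with more than \<open>p\<^sup>e\<close> elements, the \<open>K\<close>-linear system
  \<open>\<Sum>\<^sub>b c\<^sub>b D\<^sub>t(b) = 0\<close> would have a nontrivial solution. Take one of minimal support with a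
  coefficient 1: applying a derivation \<open>D\<^sub>\<epsilon>\<^sub>l\<close> gives a solution of smaller support, so all
  coefficients lie in \<open>C\<^sub>K\<close>, and the equation for \<open>t = 0\<close> contradicts independence.\<close>

section \<open>Multi-index power series\<close>

definition fin_supp :: "(nat \<Rightarrow> nat) \<Rightarrow> bool" where
  "fin_supp a \<longleftrightarrow> finite {l. a l \<noteq> 0}"

definition lower_idx :: "(nat \<Rightarrow> nat) \<Rightarrow> (nat \<Rightarrow> nat) set" where
  "lower_idx a = {b. \<forall>l. b l \<le> a l}"

lemma ps_mult_lower_idx: "ps_mult f g a = (\<Sum>b\<in>lower_idx a. f b * g (\<lambda>l. a l - b l))"
  unfolding ps_mult_def lower_idx_def ..

lemma lower_idx_refl [simp]: "a \<in> lower_idx a"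
  by (simp add: lower_idx_def)

lemma lower_idx_zero: "lower_idx (\<lambda>_. 0) = {\<lambda>_. 0}"
  by (auto simp: lower_idx_def)

lemma diff_in_lower_idx: "(\<lambda>l. a l - b l) \<in> lower_idx a"
  by (simp add: lower_idx_def)

lemma finite_lower_idx:
  assumes "fin_supp a"
  shows "finite (lower_idx a)"
proof -
  let ?S = "{l. a l \<noteq> 0}"
  have "finite ?S" using assms by (simp add: fin_supp_def)
  have "lower_idx a \<subseteq> {f. \<forall>x. (x \<in> ?S \<longrightarrow> f x \<in> {0..Max (a ` ?S)}) \<and> (x \<notin> ?S \<longrightarrow> f x = 0)}"
  proof (intro subsetI CollectI allI conjI impI)
    fix b x assume b: "b \<in> lower_idx a"
    then show "x \<notin> ?S \<Longrightarrow> b x = 0"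
      by (metis (mono_tags) le_zero_eq lower_idx_def mem_Collect_eq)
    assume "x \<in> ?S"
    then have "a x \<le> Max (a ` ?S)" using \<open>finite ?S\<close> by (intro Max_ge) auto
    then show "b x \<in> {0..Max (a ` ?S)}" using b by (auto simp: lower_idx_def intro: le_trans)
  qed
  moreover have "finite {f. \<forall>x. (x \<in> ?S \<longrightarrow> f x \<in> {0..Max (a ` ?S)}) \<and> (x \<notin> ?S \<longrightarrow> f x = (0::nat))}"
    by (rule finite_set_of_finite_funs) (use \<open>finite ?S\<close> in auto)
  ultimately show ?thesis by (rule finite_subset)
qed

lemma fin_supp_mono: "fin_supp a \<Longrightarrow> b \<in> lower_idx a \<Longrightarrow> fin_supp b"
  unfolding fin_supp_def lower_idx_def
  by (rule finite_subset[rotated]) (auto intro: less_le_trans)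

lemma fin_supp_diff: "fin_supp a \<Longrightarrow> fin_supp (\<lambda>l. a l - b l)"
  using fin_supp_mono diff_in_lower_idx by blast

lemma sum_lower_idx_reflect:
  "(\<Sum>c\<in>lower_idx a. h c (\<lambda>l. a l - c l)) = (\<Sum>c\<in>lower_idx a. h (\<lambda>l. a l - c l) c)"
  by (rule sum.reindex_bij_witness[where i="\<lambda>c l. a l - c l" and j="\<lambda>c l. a l - c l"])
     (auto simp: lower_idx_def fun_eq_iff)

lemma ps_mult_commute: "ps_mult f g a = ps_mult g f a"
  unfolding ps_mult_lower_idx by (subst sum_lower_idx_reflect) (simp add: mult.commute)

lemma ps_mult_cong_right:
  assumes "fin_supp a" "\<And>b. fin_supp b \<Longrightarrow> h b = h' b"
  shows "ps_mult f h a = ps_mult f h' a"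
  unfolding ps_mult_lower_idx using assms fin_supp_diff by (intro sum.cong) auto

lemma ps_mult_assoc:
  assumes "fin_supp a"
  shows "ps_mult (ps_mult f g) h a = ps_mult f (ps_mult g h) a"
proof -
  have fin: "finite (lower_idx a)" using finite_lower_idx assms .
  have "ps_mult (ps_mult f g) h a = (\<Sum>b\<in>lower_idx a. \<Sum>c\<in>{c. c \<in> lower_idx a \<and> c \<in> lower_idx b}.
      f c * g (\<lambda>l. b l - c l) * h (\<lambda>l. a l - b l))"
    unfolding ps_mult_lower_idx sum_distrib_right
    by (intro sum.cong refl) (auto simp: lower_idx_def intro: le_trans)
  also have "\<dots> = (\<Sum>c\<in>lower_idx a. \<Sum>b\<in>{b. b \<in> lower_idx a \<and> c \<in> lower_idx b}.
      f c * g (\<lambda>l. b l - c l) * h (\<lambda>l. a l - b l))"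
    by (rule sum.swap_restrict[OF fin fin])
  also have "\<dots> = (\<Sum>c\<in>lower_idx a. \<Sum>d\<in>lower_idx (\<lambda>l. a l - c l).
      f c * (g d * h (\<lambda>l. a l - c l - d l)))"
  proof (rule sum.cong[OF refl])
    fix c assume "c \<in> lower_idx a"
    then show "(\<Sum>b\<in>{b. b \<in> lower_idx a \<and> c \<in> lower_idx b}. f c * g (\<lambda>l. b l - c l) * h (\<lambda>l. a l - b l)) =
      (\<Sum>d\<in>lower_idx (\<lambda>l. a l - c l). f c * (g d * h (\<lambda>l. a l - c l - d l)))"
      by (intro sum.reindex_bij_witness[where i="\<lambda>d l. c l + d l" and j="\<lambda>b l. b l - c l"])
         (auto simp: lower_idx_def fun_eq_iff diff_le_mono le_diff_conv2 add.commute
           intro!: arg_cong[where f=h] arg_cong[where f=g] dest: spec)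
  qed
  also have "\<dots> = ps_mult f (ps_mult g h) a"
    unfolding ps_mult_lower_idx sum_distrib_left by simp
  finally show ?thesis .
qed

lemma ps_mult_one_right:
  assumes "fin_supp a"
  shows "ps_mult f ps_one a = f a"
proof -
  have "ps_mult f ps_one a = (\<Sum>b\<in>lower_idx a. if b = a then f b else 0)"
    unfolding ps_mult_lower_idx ps_one_def
    by (intro sum.cong refl) (auto simp: lower_idx_def fun_eq_iff intro: le_antisym)
  then show ?thesis using finite_lower_idx[OF assms] by simp
qed

lemma ps_mult_one_left: "fin_supp a \<Longrightarrow> ps_mult ps_one f a = f a"
  by (subst ps_mult_commute) (rule ps_mult_one_right)

definition ps_deriv :: "nat \<Rightarrow> 'a::comm_ring_1 mps \<Rightarrow> 'a mps" where
  "ps_deriv j f = (\<lambda>a. of_nat (Suc (a j)) * f (a(j := Suc (a j))))"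

lemma fin_supp_upd: "fin_supp a \<Longrightarrow> fin_supp (a(j := n))"
  unfolding fin_supp_def by (rule finite_subset[of _ "insert j {l. a l \<noteq> 0}"]) auto

lemma ps_mult_deriv_left:
  assumes "fin_supp a" and a': "a' = a(j := Suc (a j))"
  shows "ps_mult (ps_deriv j f) g a = (\<Sum>c\<in>lower_idx a'. of_nat (c j) * f c * g (\<lambda>l. a' l - c l))"
proof -
  have "ps_mult (ps_deriv j f) g a =
      (\<Sum>c\<in>lower_idx a. of_nat (Suc (c j)) * f (c(j := Suc (c j))) * g (\<lambda>l. a l - c l))"
    by (simp add: ps_mult_lower_idx ps_deriv_def)
  also have "\<dots> = (\<Sum>c\<in>{c\<in>lower_idx a'. c j \<noteq> 0}. of_nat (c j) * f c * g (\<lambda>l. a' l - c l))"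
  proof (rule sum.reindex_bij_witness[where i="\<lambda>c. c(j := c j - 1)" and j="\<lambda>c. c(j := Suc (c j))"])
    fix c assume "c \<in> lower_idx a"
    then show "c(j := Suc (c j)) \<in> {c \<in> lower_idx a'. c j \<noteq> 0}"
      by (simp add: lower_idx_def a')
    have "(\<lambda>l. a' l - (c(j := Suc (c j))) l) = (\<lambda>l. a l - c l)"
      by (simp add: a' fun_eq_iff)
    then show "of_nat ((c(j := Suc (c j))) j) * f (c(j := Suc (c j))) * g (\<lambda>l. a' l - (c(j := Suc (c j))) l) =
      of_nat (Suc (c j)) * f (c(j := Suc (c j))) * g (\<lambda>l. a l - c l)" by simp
  next
    fix b assume b: "b \<in> {c \<in> lower_idx a'. c j \<noteq> 0}"
    then show "(b(j := b j - 1))(j := Suc ((b(j := b j - 1)) j)) = b" by auto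
    have "(b(j := b j - 1)) l \<le> a l" for l
      using b by (cases "l = j") (auto simp: lower_idx_def a' dest: spec[of _ l])
    then show "b(j := b j - 1) \<in> lower_idx a" by (simp add: lower_idx_def)
  qed simp
  also have "\<dots> = (\<Sum>c\<in>lower_idx a'. of_nat (c j) * f c * g (\<lambda>l. a' l - c l))"
    using assms(1) by (intro sum.mono_neutral_left finite_lower_idx) (auto simp: a' fin_supp_upd)
  finally show ?thesis .
qed

lemma ps_mult_deriv_right:
  assumes "fin_supp a" and a': "a' = a(j := Suc (a j))"
  shows "ps_mult f (ps_deriv j g) a = (\<Sum>c\<in>lower_idx a'. of_nat (a' j - c j) * f c * g (\<lambda>l. a' l - c l))"
proof -
  have "ps_mult f (ps_deriv j g) a = (\<Sum>c\<in>lower_idx a'. of_nat (c j) * g c * f (\<lambda>l. a' l - c l))"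
    by (subst ps_mult_commute) (rule ps_mult_deriv_left[OF assms])
  also have "\<dots> = (\<Sum>c\<in>lower_idx a'. of_nat (a' j - c j) * g (\<lambda>l. a' l - c l) * f c)"
    by (rule sum_lower_idx_reflect[where h="\<lambda>c d. of_nat (c j) * g c * f d"])
  finally show ?thesis by (simp add: ac_simps)
qed

lemma ps_deriv_mult:
  assumes "fin_supp a"
  shows "ps_deriv j (ps_mult f g) a = ps_mult (ps_deriv j f) g a + ps_mult f (ps_deriv j g) a"
proof -
  define a' where "a' = a(j := Suc (a j))"
  have "ps_deriv j (ps_mult f g) a = (\<Sum>c\<in>lower_idx a'. of_nat (a' j) * f c * g (\<lambda>l. a' l - c l))"
    by (simp add: ps_deriv_def ps_mult_lower_idx a'_def sum_distrib_left mult.assoc)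
  also have "\<dots> = (\<Sum>c\<in>lower_idx a'. of_nat (c j) * f c * g (\<lambda>l. a' l - c l)
      + of_nat (a' j - c j) * f c * g (\<lambda>l. a' l - c l))"
    by (intro sum.cong refl) (auto simp: lower_idx_def algebra_simps simp flip: of_nat_add)
  also have "\<dots> = ps_mult (ps_deriv j f) g a + ps_mult f (ps_deriv j g) a"
    by (simp add: sum.distrib ps_mult_deriv_left[OF assms a'_def] ps_mult_deriv_right[OF assms a'_def])
  finally show ?thesis .
qed

lemma ps_deriv_one: "ps_deriv j ps_one = (\<lambda>_. 0)"
  by (auto simp: ps_deriv_def ps_one_def fun_eq_iff dest: spec[of _ j])

lemma ps_pow_0: "ps_pow G 0 = ps_one"
  by (simp add: ps_pow_def)

lemma ps_pow_Suc: "ps_pow G (Suc n) = ps_mult G (ps_pow G n)"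
  by (simp add: ps_pow_def)

lemma ps_mult_scale_right: "ps_mult f (\<lambda>b. s * h b) a = s * ps_mult f h a"
  by (simp add: ps_mult_lower_idx sum_distrib_left algebra_simps)

lemma ps_deriv_pow:
  "fin_supp a \<Longrightarrow> ps_deriv j (ps_pow G (Suc n)) a = of_nat (Suc n) * ps_mult (ps_pow G n) (ps_deriv j G) a"
proof (induction n arbitrary: a)
  case 0
  have "ps_deriv j (ps_pow G (Suc 0)) a = ps_mult (ps_deriv j G) ps_one a + ps_mult G (ps_deriv j ps_one) a"
    unfolding ps_pow_Suc ps_pow_0 by (rule ps_deriv_mult[OF 0])
  moreover have "ps_mult G (ps_deriv j ps_one) a = 0"
    by (simp add: ps_deriv_one ps_mult_lower_idx)
  ultimately show ?case by (simp add: ps_pow_0 ps_mult_one_right[OF 0] ps_mult_one_left[OF 0])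
next
  case (Suc n)
  have "ps_deriv j (ps_pow G (Suc (Suc n))) a
      = ps_mult (ps_deriv j G) (ps_pow G (Suc n)) a + ps_mult G (ps_deriv j (ps_pow G (Suc n))) a"
    unfolding ps_pow_Suc[of G "Suc n"] by (rule ps_deriv_mult[OF Suc.prems])
  also have "ps_mult G (ps_deriv j (ps_pow G (Suc n))) a
      = ps_mult G (\<lambda>b. of_nat (Suc n) * ps_mult (ps_pow G n) (ps_deriv j G) b) a"
    by (rule ps_mult_cong_right[OF Suc.prems Suc.IH])
  also have "\<dots> = of_nat (Suc n) * ps_mult (ps_pow G (Suc n)) (ps_deriv j G) a"
    by (simp add: ps_mult_scale_right ps_pow_Suc ps_mult_assoc[OF Suc.prems])
  finally show ?case by (simp add: ps_mult_commute[of "ps_deriv j G"] algebra_simps)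
qed

section \<open>\<open>p\<close>-th powers in characteristic \<open>p\<close>\<close>

lemma of_nat_neq_0_below_char:
  assumes "prime p" "of_nat p = (0::'a::field)" "0 < n" "n < p"
  shows "of_nat n \<noteq> (0::'a)"
proof
  assume "of_nat n = (0::'a)"
  then have "CHAR('a) dvd gcd n p"
    using assms(2) by (simp add: of_nat_eq_0_iff_char_dvd)
  moreover have "coprime n p"
    using assms by (metis coprime_commute nat_dvd_not_less prime_imp_coprime)
  ultimately show False
    by (metis coprime_iff_gcd_eq_1 dvd_1_iff_1 of_nat_1 of_nat_eq_0_iff_char_dvd one_neq_zero)
qed

text \<open>The coefficient of \<open>\<partial>\<^sub>j(G\<^sup>p) = p G\<^sup>p\<^sup>-\<^sup>1 \<partial>\<^sub>j G = 0\<close> at \<open>c - \<epsilon>\<^sub>j\<close> is \<open>c\<^sub>j\<close> times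
  the coefficient of \<open>G\<^sup>p\<close> at \<open>c\<close>.\<close>
lemma ps_pow_coeff_eq_0_if_of_nat_neq_0:
  assumes "of_nat p = (0::'a::idom)" "0 < p" "fin_supp c" "of_nat (c j) \<noteq> (0::'a)"
  shows "ps_pow (G :: 'a mps) p c = 0"
proof -
  define a where "a = c(j := c j - 1)"
  have "c j \<noteq> 0" using assms(4) by (metis of_nat_0)
  then have "Suc (a j) = c j" "a(j := c j) = c" by (auto simp: a_def)
  then have "of_nat (c j) * ps_pow G p c = ps_deriv j (ps_pow G p) a"
    by (simp only: ps_deriv_def)
  also have "\<dots> = ps_deriv j (ps_pow G (Suc (p - 1))) a"
    using \<open>0 < p\<close> by simp
  also have "\<dots> = 0"
    using ps_deriv_pow[of a j G "p - 1"] assms(1-3) by (simp add: a_def fin_supp_upd)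
  finally show ?thesis using assms(4) by simp
qed

lemma ps_pow_char_coeff_eq_0:
  assumes "prime p" "of_nat p = (0::'a::field)" "G (\<lambda>_. 0) = (0::'a)" "fin_supp c" "\<forall>x. c x < p"
  shows "ps_pow G p c = 0"
proof (cases "c = (\<lambda>_. 0)")
  case True
  have "ps_pow G (Suc (p - 1)) c = 0"
    unfolding ps_pow_Suc ps_mult_lower_idx True lower_idx_zero using assms(3) by simp
  then show ?thesis using prime_gt_0_nat[OF assms(1)] by simp
next
  case False
  then obtain j where "c j \<noteq> 0" by auto
  then have "of_nat (c j) \<noteq> (0::'a)"
    using of_nat_neq_0_below_char assms(1,2,5) by blast
  then show ?thesis
    by (rule ps_pow_coeff_eq_0_if_of_nat_neq_0[OF assms(2) prime_gt_0_nat[OF assms(1)] assms(4)])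
qed

section \<open>Truncated products\<close>

definition vanishes_below :: "(nat \<Rightarrow> nat) \<Rightarrow> 'a::zero mps \<Rightarrow> bool" where
  "vanishes_below a f \<longleftrightarrow> (\<forall>c\<in>lower_idx a. f c = 0)"

lemma lower_idx_trans: "b \<in> lower_idx c \<Longrightarrow> c \<in> lower_idx a \<Longrightarrow> b \<in> lower_idx a"
  by (auto simp: lower_idx_def intro: le_trans)

lemma tmult_apply: "tmult p m N f g c = (if trunc_idx p m N c then ps_mult f g c else 0)"
  by (simp add: tmult_def ps_trunc_def)

lemma tpow_Suc: "tpow p m N G (Suc d) = tmult p m N G (tpow p m N G d)"
  by (simp add: tpow_def)

lemma tmult_vanishes_below:
  assumes "vanishes_below a f \<or> vanishes_below a g"
  shows "vanishes_below a (tmult p m N f g)"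
  unfolding vanishes_below_def
proof
  fix c assume c: "c \<in> lower_idx a"
  have "f b * g (\<lambda>l. c l - b l) = 0" if "b \<in> lower_idx c" for b
    using assms lower_idx_trans[OF that c] lower_idx_trans[OF diff_in_lower_idx c]
    unfolding vanishes_below_def by auto
  then show "tmult p m N f g c = 0" by (simp add: tmult_apply ps_mult_lower_idx)
qed

lemma tpow_vanishes_below_mono:
  assumes "vanishes_below a (tpow p m N G q)" "q \<le> d"
  shows "vanishes_below a (tpow p m N G d)"
  using assms(2) by (induction rule: dec_induct) (simp_all add: assms(1) tpow_Suc tmult_vanishes_below)

lemma tmonprod_vanishes_below:
  "s < n \<Longrightarrow> vanishes_below a (tpow p m N (F s) (t s)) \<Longrightarrow> vanishes_below a (tmonprod p m N n F t)"
  by (induction n) (auto simp: tmult_vanishes_below less_Suc_eq)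

lemma tpow_eq_ps_pow:
  assumes "\<forall>c\<in>lower_idx a. trunc_idx p m N c" "c \<in> lower_idx a"
  shows "tpow p m N G n c = ps_pow G n c"
  using assms(2)
proof (induction n arbitrary: c)
  case 0
  then show ?case using assms(1) by (simp add: tpow_def ps_pow_def ps_trunc_def)
next
  case (Suc n)
  have "tpow p m N G (Suc n) c = ps_mult G (tpow p m N G n) c"
    using assms(1) Suc.prems by (simp add: tpow_Suc tmult_apply)
  also have "\<dots> = ps_mult G (ps_pow G n) c"
    unfolding ps_mult_lower_idx using Suc.IH lower_idx_trans[OF diff_in_lower_idx Suc.prems] by simp
  finally show ?case by (simp add: ps_pow_Suc)
qed

lemma tpow_char_vanishes_below:
  assumes "prime p" "of_nat p = (0::'a::field)" "G (\<lambda>_. 0) = (0::'a)" "fin_supp a" "\<forall>x. a x < p"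
    and "\<forall>c\<in>lower_idx a. trunc_idx p m N c"
  shows "vanishes_below a (tpow p m N G p)"
  unfolding vanishes_below_def
proof
  fix c assume c: "c \<in> lower_idx a"
  have "\<forall>x. c x < p"
    using c assms(5) unfolding lower_idx_def by (metis le_less_trans mem_Collect_eq)
  then have "ps_pow G p c = 0"
    by (rule ps_pow_char_coeff_eq_0[of p G c, OF assms(1-3) fin_supp_mono[OF assms(4) c]])
  then show "tpow p m N G p c = 0" by (simp add: tpow_eq_ps_pow[OF assms(6) c])
qed

lemma below_if_less:
  assumes "0 < m" "x < p"
  shows "below p m x"
proof (cases m)
  case (enat m')
  then have "p ^ 1 \<le> p ^ m'"
    using assms by (intro power_increasing) (auto simp: zero_enat_def)
  then show ?thesis using enat assms(2) by (simp add: below_def)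
qed (simp add: below_def)

lemma tmonprod_coeff_eq_0:
  assumes "prime p" "of_nat p = (0::'a::field)" "0 < m"
    and "msupp_in N a" "\<forall>x. a x < p"
    and "s < n" "p \<le> t s" "F s (\<lambda>_. 0) = 0"
  shows "tmonprod p m N n F t a = (0::'a)"
proof -
  have "{x. a x \<noteq> 0} \<subseteq> {..<N}"
    using assms(4) by (auto simp: msupp_in_def not_less[symmetric])
  then have "fin_supp a" by (simp add: fin_supp_def finite_subset)
  moreover have "trunc_idx p m N c" if "c \<in> lower_idx a" for c
  proof -
    have "c x \<le> a x" for x using that by (simp add: lower_idx_def)
    then show ?thesis
      using assms(3-5) unfolding trunc_idx_def msupp_in_def
      by (metis le_less_trans le_zero_eq below_if_less)
  qed
  ultimately have "vanishes_below a (tpow p m N (F s) p)"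
    using assms(1,2,5,8) by (intro tpow_char_vanishes_below) auto
  then have "vanishes_below a (tmonprod p m N n F t)"
    using assms(6,7) by (blast intro: tmonprod_vanishes_below tpow_vanishes_below_mono)
  then show ?thesis by (simp add: vanishes_below_def)
qed

section \<open>Derivations and the degree over their constants\<close>

definition derivation :: "('a::comm_ring_1 \<Rightarrow> 'a) \<Rightarrow> bool" where
  "derivation d \<longleftrightarrow> (\<forall>r s. d (r + s) = d r + d s \<and> d (r * s) = d r * s + r * d s)"

lemma derivation_add: "derivation d \<Longrightarrow> d (r + s) = d r + d s"
  by (simp add: derivation_def)

lemma derivation_mult: "derivation d \<Longrightarrow> d (r * s) = d r * s + r * d s"
  by (simp add: derivation_def)

lemma derivation_zero: "derivation d \<Longrightarrow> d 0 = 0"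
  using derivation_add[of d 0 0] by simp

lemma derivation_one: "derivation d \<Longrightarrow> d 1 = 0"
  using derivation_mult[of d 1 1] by simp

lemma derivation_minus: "derivation d \<Longrightarrow> d (- r) = - d r"
  using derivation_add[of d r "- r"] derivation_zero[of d] by (simp add: eq_neg_iff_add_eq_0 add.commute)

lemma derivation_sum: "derivation d \<Longrightarrow> d (\<Sum>b\<in>B. f b) = (\<Sum>b\<in>B. d (f b))"
  by (induction B rule: infinite_finite_induct) (simp_all add: derivation_zero derivation_add)

lemma derivation_inverse:
  assumes "derivation d" "d x = (0::'a::field)"
  shows "d (inverse x) = 0"
proof (cases "x = 0")
  case False
  have "x * d (inverse x) = d (x * inverse x)"
    using assms by (simp add: derivation_mult)
  also have "\<dots> = 0" using False assms(1) by (simp add: derivation_one)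
  finally show ?thesis using False by simp
qed (simp add: assms(1) derivation_zero)

lemma is_subfield_mult: "is_subfield C \<Longrightarrow> x \<in> C \<Longrightarrow> y \<in> C \<Longrightarrow> x * y \<in> C"
  by (simp add: is_subfield_def)

lemma is_subfield_minus: "is_subfield C \<Longrightarrow> x \<in> C \<Longrightarrow> - x \<in> C"
  by (simp add: is_subfield_def)

lemma is_subfield_inverse: "is_subfield C \<Longrightarrow> x \<in> C \<Longrightarrow> inverse x \<in> C"
  by (simp add: is_subfield_def)

lemma derivation_kernel_is_subfield:
  assumes "\<forall>d\<in>\<Delta>. derivation d"
  shows "is_subfield {r::'a::field. \<forall>d\<in>\<Delta>. d r = 0}"
  using assms by (auto simp: is_subfield_def derivation_zero derivation_one derivation_add
      derivation_mult derivation_minus derivation_inverse)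

lemma homogeneous_system_nontrivial_solution:
  fixes v :: "'b \<Rightarrow> 'i \<Rightarrow> 'a::field"
  assumes "finite I" "finite B" "card I < card B"
  shows "\<exists>c. (\<exists>b\<in>B. c b \<noteq> 0) \<and> (\<forall>i\<in>I. (\<Sum>b\<in>B. c b * v b i) = 0)"
  using assms
proof (induction I arbitrary: B v rule: finite_induct)
  case empty
  then obtain b1 where "b1 \<in> B" by fastforce
  then show ?case by (intro exI[of _ "\<lambda>b. if b = b1 then 1 else 0"]) auto
next
  case (insert i I)
  show ?case
  proof (cases "\<forall>b\<in>B. v b i = 0")
    case True
    then show ?thesis using insert.IH[OF insert.prems(1), of v] insert.prems insert.hyps by auto
  next
    case False
    then obtain b1 where b1: "b1 \<in> B" "v b1 i \<noteq> 0" by auto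
    define B' where "B' = B - {b1}"
    have "card I < card B'" using insert.prems b1 insert.hyps by (simp add: B'_def)
    \<comment> \<open>Gaussian elimination of the unknown at b1 by means of equation i.\<close>
    define w where "w b j = v b j - v b i / v b1 i * v b1 j" for b j
    obtain c' where c': "\<exists>b\<in>B'. c' b \<noteq> 0" "\<forall>j\<in>I. (\<Sum>b\<in>B'. c' b * w b j) = 0"
      using insert.IH[of B' w] insert.prems(1) \<open>card I < card B'\<close> by (auto simp: B'_def)
    define c where "c = c'(b1 := - (\<Sum>b\<in>B'. c' b * v b i) / v b1 i)"
    have elim: "(\<Sum>b\<in>B. c b * v b j) = (\<Sum>b\<in>B'. c' b * w b j)" for j
    proof -
      have "(\<Sum>b\<in>B. c b * v b j) = c b1 * v b1 j + (\<Sum>b\<in>B'. c b * v b j)"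
        unfolding B'_def using insert.prems(1) b1(1) by (rule sum.remove)
      also have "(\<Sum>b\<in>B'. c b * v b j) = (\<Sum>b\<in>B'. c' b * v b j)"
        by (intro sum.cong) (auto simp: c_def B'_def)
      also have "c b1 * v b1 j + (\<Sum>b\<in>B'. c' b * v b j) = (\<Sum>b\<in>B'. c' b * w b j)"
        by (simp add: c_def w_def algebra_simps sum_subtractf sum_distrib_left
            flip: sum_divide_distrib)
      finally show ?thesis .
    qed
    have "w b i = 0" for b using b1(2) by (simp add: w_def)
    then show ?thesis
      using c' elim by (intro exI[of _ c]) (auto simp: c_def B'_def)
  qed
qed

definition lin_rel :: "('i \<Rightarrow> 'b \<Rightarrow> 'a::comm_ring_1) \<Rightarrow> 'i set \<Rightarrow> 'b set \<Rightarrow> ('b \<Rightarrow> 'a) \<Rightarrow> bool" where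
  "lin_rel T I B c \<longleftrightarrow> (\<forall>i\<in>I. (\<Sum>b\<in>B. c b * T i b) = 0)"

lemma derivation_lin_rel:
  assumes "derivation d" "lin_rel T I B c"
    and closed: "\<And>i. i \<in> I \<Longrightarrow> \<exists>M. \<forall>r. d (T i r) = (\<Sum>t\<in>I. M t * T t r)"
  shows "lin_rel T I B (\<lambda>b. d (c b))"
  unfolding lin_rel_def
proof
  fix i assume "i \<in> I"
  then obtain M where M: "\<And>r. d (T i r) = (\<Sum>t\<in>I. M t * T t r)" using closed by blast
  have "0 = d (\<Sum>b\<in>B. c b * T i b)"
    using assms(1,2) \<open>i \<in> I\<close> by (simp add: lin_rel_def derivation_zero)
  also have "\<dots> = (\<Sum>b\<in>B. d (c b) * T i b) + (\<Sum>b\<in>B. \<Sum>t\<in>I. M t * (c b * T t b))"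
    using assms(1) by (simp add: derivation_sum derivation_mult M sum.distrib sum_distrib_left
        mult.left_commute)
  also have "(\<Sum>b\<in>B. \<Sum>t\<in>I. M t * (c b * T t b)) = (\<Sum>t\<in>I. M t * (\<Sum>b\<in>B. c b * T t b))"
    by (simp add: sum_distrib_left sum.swap[of _ B])
  also have "(\<Sum>t\<in>I. M t * (\<Sum>b\<in>B. c b * T t b)) = 0"
    using assms(2) by (simp add: lin_rel_def)
  finally show "(\<Sum>b\<in>B. d (c b) * T i b) = 0" by simp
qed

lemma lin_rel_with_constant_coeffs:
  assumes "\<forall>d\<in>\<Delta>. derivation d" "finite B"
    and closed: "\<And>d i. d \<in> \<Delta> \<Longrightarrow> i \<in> I \<Longrightarrow> \<exists>M. \<forall>r. d (T i r) = (\<Sum>t\<in>I. M t * T t r)"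
    and "lin_rel T I B c" "\<exists>b\<in>B. c b \<noteq> (0::'a::field)"
  shows "\<exists>c. lin_rel T I B c \<and> (\<exists>b\<in>B. c b \<noteq> 0) \<and> (\<forall>b\<in>B. \<forall>d\<in>\<Delta>. d (c b) = 0)"
  using assms(4,5)
proof (induction "card {b\<in>B. c b \<noteq> 0}" arbitrary: c rule: less_induct)
  case less
  then obtain b0 where b0: "b0 \<in> B" "c b0 \<noteq> 0" by blast
  define c' where "c' b = c b / c b0" for b
  have rel': "lin_rel T I B c'"
    using less.prems(1) by (simp add: lin_rel_def c'_def flip: sum_divide_distrib)
  have "c' b0 = 1" using b0 by (simp add: c'_def)
  show ?case
  proof (cases "\<forall>b\<in>B. \<forall>d\<in>\<Delta>. d (c' b) = 0")
    case True
    then show ?thesis using rel' b0(1) \<open>c' b0 = 1\<close> by (intro exI[of _ c']) (auto intro!: bexI[of _ b0])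
  next
    case False
    then obtain b d where bd: "b \<in> B" "d \<in> \<Delta>" "d (c' b) \<noteq> 0" by blast
    have der: "derivation d" using assms(1) bd(2) by blast
    have "{b\<in>B. d (c' b) \<noteq> 0} \<subseteq> {b\<in>B. c b \<noteq> 0} - {b0}"
    proof
      fix b assume b: "b \<in> {b\<in>B. d (c' b) \<noteq> 0}"
      then have "c' b \<noteq> 0" "b \<noteq> b0"
        using \<open>c' b0 = 1\<close> derivation_zero[OF der] derivation_one[OF der] by auto
      then show "b \<in> {b\<in>B. c b \<noteq> 0} - {b0}" using b by (simp add: c'_def)
    qed
    then have "card {b\<in>B. d (c' b) \<noteq> 0} \<le> card ({b\<in>B. c b \<noteq> 0} - {b0})"
      by (rule card_mono[rotated]) (simp add: assms(2))
    also have "\<dots> < card {b\<in>B. c b \<noteq> 0}"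
      by (rule card_Diff1_less) (simp_all add: assms(2) b0)
    finally have "card {b\<in>B. d (c' b) \<noteq> 0} < card {b\<in>B. c b \<noteq> 0}" .
    moreover have "lin_rel T I B (\<lambda>b. d (c' b))"
      using derivation_lin_rel[OF der rel'] closed bd(2) by blast
    ultimately show ?thesis
      by (rule less.hyps) (use bd(1,3) in blast)
  qed
qed

lemma lin_indep_card_le:
  assumes "\<forall>d\<in>\<Delta>. derivation d" "finite I" "i0 \<in> I" "T i0 = (\<lambda>r. r)"
    and closed: "\<And>d i. d \<in> \<Delta> \<Longrightarrow> i \<in> I \<Longrightarrow> \<exists>M. \<forall>r. d (T i r) = (\<Sum>t\<in>I. M t * T t r)"
    and indep: "lin_indep_over {r::'a::field. \<forall>d\<in>\<Delta>. d r = 0} B"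
  shows "card B \<le> card I"
proof (rule ccontr)
  assume "\<not> card B \<le> card I"
  moreover have "finite B" using indep by (simp add: lin_indep_over_def)
  ultimately obtain c where "\<exists>b\<in>B. c b \<noteq> 0" "\<forall>i\<in>I. (\<Sum>b\<in>B. c b * T i b) = 0"
    using homogeneous_system_nontrivial_solution[OF assms(2), of B "\<lambda>b i. T i b"] by force
  then obtain c where c: "lin_rel T I B c" "\<exists>b\<in>B. c b \<noteq> 0" "\<forall>b\<in>B. \<forall>d\<in>\<Delta>. d (c b) = 0"
    using lin_rel_with_constant_coeffs[OF assms(1) \<open>finite B\<close> closed] unfolding lin_rel_def
    by blast
  have "(\<Sum>b\<in>B. c b * T i0 b) = 0"
    using c(1) assms(3) unfolding lin_rel_def by blast
  then have "(\<Sum>b\<in>B. c b * b) = 0"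
    using assms(4) by simp
  then show False
    using indep c(2,3) unfolding lin_indep_over_def by blast
qed

lemma in_span_if_insert_dependent:
  assumes "is_subfield C" "lin_indep_over C B" "\<not> lin_indep_over C (insert x B)"
  shows "\<exists>c. (\<forall>b\<in>B. c b \<in> C) \<and> x = (\<Sum>b\<in>B. c b * b)"
proof -
  have "finite B" using assms(2) by (simp add: lin_indep_over_def)
  have "x \<notin> B"
  proof
    assume "x \<in> B"
    then have "insert x B = B" by blast
    then show False using assms(2,3) by simp
  qed
  obtain c where cC: "\<forall>b\<in>insert x B. c b \<in> C" and "(\<Sum>b\<in>insert x B. c b * b) = 0"
    and nz: "\<exists>b\<in>insert x B. c b \<noteq> 0"
    using assms(3) \<open>finite B\<close> unfolding lin_indep_over_def finite_insert not_all not_imp by blast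
  then have sum0: "c x * x + (\<Sum>b\<in>B. c b * b) = 0"
    using \<open>finite B\<close> \<open>x \<notin> B\<close> by simp
  have "c x \<noteq> 0"
  proof
    assume "c x = 0"
    then have "(\<Sum>b\<in>B. c b * b) = 0" using sum0 by simp
    moreover have "\<forall>b\<in>B. c b \<in> C" using cC by simp
    ultimately have "\<forall>b\<in>B. c b = 0" using assms(2) unfolding lin_indep_over_def by blast
    then show False using nz \<open>c x = 0\<close> by blast
  qed
  have sum: "(\<Sum>b\<in>B. c b * b) = - (c x * x)"
    using sum0 by (simp add: eq_neg_iff_add_eq_0 add.commute)
  have "(\<Sum>b\<in>B. (- c b * inverse (c x)) * b) = - inverse (c x) * (\<Sum>b\<in>B. c b * b)"
    by (simp add: sum_distrib_left algebra_simps)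
  also have "\<dots> = x"
    using sum \<open>c x \<noteq> 0\<close> by simp
  finally have "x = (\<Sum>b\<in>B. (- c b * inverse (c x)) * b)" ..
  moreover have "- c b * inverse (c x) \<in> C" if "b \<in> B" for b
    using assms(1) cC that by (simp add: is_subfield_mult is_subfield_minus is_subfield_inverse)
  ultimately show ?thesis by (intro exI[of _ "\<lambda>b. - c b * inverse (c x)"]) simp
qed

lemma field_degree_le_if_lin_indep_card_le:
  assumes "is_subfield C" "\<And>B. lin_indep_over C B \<Longrightarrow> card B \<le> n"
  shows "field_degree_le C n"
proof -
  have "lin_indep_over C {}" by (simp add: lin_indep_over_def)
  moreover have "\<forall>B. lin_indep_over C B \<longrightarrow> card B < Suc n"
    using assms(2) by (simp add: less_Suc_eq_le)
  ultimately obtain B where B: "lin_indep_over C B"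
    and max: "\<And>B'. lin_indep_over C B' \<Longrightarrow> card B' \<le> card B"
    using Lattices_Big.ex_has_greatest_nat[of "lin_indep_over C" "{}" card] by blast
  have "finite B" using B by (simp add: lin_indep_over_def)
  have "\<exists>c. (\<forall>b\<in>B. c b \<in> C) \<and> x = (\<Sum>b\<in>B. c b * b)" for x
  proof (cases "x \<in> B")
    case True
    have "(\<Sum>b\<in>B. (if b = x then 1 else 0) * b) = (\<Sum>b\<in>B. if b = x then b else 0)"
      by (intro sum.cong) auto
    also have "\<dots> = x"
      using \<open>finite B\<close> True by simp
    finally have "x = (\<Sum>b\<in>B. (if b = x then 1 else 0) * b)" ..
    then show ?thesis using assms(1) by (intro exI[of _ "\<lambda>b. if b = x then 1 else 0"]) (auto simp: is_subfield_def)
  next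
    case False
    then have "\<not> lin_indep_over C (insert x B)"
      using max[of "insert x B"] \<open>finite B\<close> by auto
    then show ?thesis using in_span_if_insert_dependent assms(1) B by blast
  qed
  then show ?thesis
    unfolding field_degree_le_def spans_over_def using B assms(2) by blast
qed

lemma field_degree_le_if_derivation_closed:
  assumes "\<forall>d\<in>\<Delta>. derivation d" "finite I" "i0 \<in> I" "T i0 = (\<lambda>r. r)"
    and "\<And>d i. d \<in> \<Delta> \<Longrightarrow> i \<in> I \<Longrightarrow> \<exists>M. \<forall>r. d (T i r) = (\<Sum>t\<in>I. M t * T t r)"
  shows "field_degree_le {r::'a::field. \<forall>d\<in>\<Delta>. d r = 0} (card I)"
  using assms by (intro field_degree_le_if_lin_indep_card_le derivation_kernel_is_subfield lin_indep_card_le)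

lemma field_degree_le_mono: "field_degree_le C n \<Longrightarrow> n \<le> n' \<Longrightarrow> field_degree_le C n'"
  by (auto simp: field_degree_le_def)

section \<open>Constants of a \<open>\<Phi>[m]\<close>-field\<close>

definition unit_idx :: "nat \<Rightarrow> nat \<Rightarrow> nat" where
  "unit_idx l = (\<lambda>t. if t = l then 1 else 0)"

definition small_idx :: "nat \<Rightarrow> nat \<Rightarrow> (nat \<Rightarrow> nat) set" where
  "small_idx p e = {i. msupp_in e i \<and> (\<forall>l<e. i l < p)}"

lemma small_idx_finite_card:
  shows "finite (small_idx p e)" and "card (small_idx p e) \<le> p ^ e"
proof -
  have "i x = j x"
    if "restrict i {..<e} = restrict j {..<e}" "i \<in> small_idx p e" "j \<in> small_idx p e" for i j x
    using that(2,3) fun_cong[OF that(1), of x]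
    by (cases "x < e") (auto simp: small_idx_def msupp_in_def restrict_def)
  then have inj: "inj_on (\<lambda>i. restrict i {..<e}) (small_idx p e)"
    by (intro inj_onI ext)
  have into: "(\<lambda>i. restrict i {..<e}) ` small_idx p e \<subseteq> PiE {..<e} (\<lambda>_. {..<p})"
  proof (rule image_subsetI)
    fix i assume "i \<in> small_idx p e"
    then show "restrict i {..<e} \<in> PiE {..<e} (\<lambda>_. {..<p})"
      by (intro restrict_PiE_iff[THEN iffD2]) (simp add: small_idx_def)
  qed
  have fin: "finite (PiE {..<e} (\<lambda>_. {..<p}))" by (simp add: finite_PiE)
  show "finite (small_idx p e)"
    using finite_imageD[OF finite_subset[OF into fin] inj] .
  have "card (small_idx p e) \<le> card (PiE {..<e} (\<lambda>_. {..<p}))"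
    using card_inj_on_le[OF inj into fin] .
  then show "card (small_idx p e) \<le> p ^ e" by (simp add: card_PiE)
qed

lemma zero_in_small_idx: "0 < p \<Longrightarrow> (\<lambda>_. 0) \<in> small_idx p e"
  by (simp add: small_idx_def msupp_in_def)

lemma trunc_idx_small_idx: "0 < m \<Longrightarrow> i \<in> small_idx p e \<Longrightarrow> trunc_idx p m e i"
  by (simp add: small_idx_def trunc_idx_def below_if_less)

lemma trunc_idx_unit_idx: "0 < m \<Longrightarrow> 1 < p \<Longrightarrow> l < e \<Longrightarrow> trunc_idx p m e (unit_idx l)"
  by (auto simp: trunc_idx_def msupp_in_def unit_idx_def below_if_less)

lemma lower_idx_unit_idx: "lower_idx (unit_idx l) = {\<lambda>_. 0, unit_idx l}"
proof (intro equalityI subsetI)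
  fix b assume "b \<in> lower_idx (unit_idx l)"
  then have b: "b x \<le> unit_idx l x" for x by (simp add: lower_idx_def)
  show "b \<in> {\<lambda>_. 0, unit_idx l}"
  proof (cases "b l = 0")
    case True
    have "b = (\<lambda>_. 0)"
      using b True by (intro ext) (metis le_zero_eq unit_idx_def)
    then show ?thesis by simp
  next
    case False
    have "b = unit_idx l"
      using b False by (intro ext) (metis le_zero_eq le_antisym less_one not_less unit_idx_def)
    then show ?thesis by simp
  qed
qed (auto simp: lower_idx_def)

lemma hs_derivation_unit_idx:
  assumes hs: "hs_derivation p m e k D" and "0 < m" "1 < p" "l < e"
  shows "derivation (D (unit_idx l))"
proof -
  have tr: "trunc_idx p m e (unit_idx l)" using assms trunc_idx_unit_idx by blast
  have D0: "D (\<lambda>_. 0) r = r" for r using hs by (simp add: hs_derivation_def)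
  have ne: "(\<lambda>_. 0) \<noteq> unit_idx l" by (auto simp: unit_idx_def fun_eq_iff)
  have "D (unit_idx l) (r * s) = D (unit_idx l) r * s + r * D (unit_idx l) s" for r s
  proof -
    have "D (unit_idx l) (r * s) = (\<Sum>b\<in>lower_idx (unit_idx l). D b r * D (\<lambda>x. unit_idx l x - b x) s)"
      using hs tr unfolding hs_derivation_def lower_idx_def by blast
    also have "\<dots> = r * D (unit_idx l) s + D (unit_idx l) r * s"
      using ne by (simp add: lower_idx_unit_idx D0)
    finally show ?thesis by simp
  qed
  then show ?thesis
    using hs tr by (simp add: derivation_def hs_derivation_def)
qed

lemma Phi_trunc_const_eq_0:
  assumes "formal_group_law k e \<Phi>" "s < e"
  shows "Phi_trunc p m e \<Phi> s (\<lambda>_. 0) = 0"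
proof -
  have "\<Phi> s (\<lambda>_. 0) = ps_add (ps_var s) (ps_var (e + s)) (\<lambda>_. 0)"
    using assms unfolding formal_group_law_def by (simp add: msupp_in_def tdeg_def)
  also have "\<dots> = 0"
    by (auto simp: ps_add_def ps_var_def fun_eq_iff dest: spec)
  finally show ?thesis by (simp add: Phi_trunc_def ps_trunc_def)
qed

lemma F_derivation_unit_idx_closed:
  fixes F :: "nat \<Rightarrow> 'a::field mps"
  assumes "prime p" "of_nat p = (0::'a)" "0 < m"
    and "F_derivation p m e F D" "\<forall>s<e. F s (\<lambda>_. 0) = 0" "l < e" "i \<in> small_idx p e"
  shows "\<exists>M. \<forall>r. D (unit_idx l) (D i r) = (\<Sum>t\<in>small_idx p e. M t * D t r)"
proof (intro exI allI)
  fix r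
  define M where "M t = tmonprod p m (2 * e) e F t (join_idx e i (unit_idx l))" for t
  have "1 < p" using assms(1) prime_gt_1_nat by blast
  have M0: "M t = 0" if "trunc_idx p m e t" "t \<notin> small_idx p e" for t
  proof -
    have "\<not> (\<forall>l<e. t l < p)"
      using that by (simp add: small_idx_def trunc_idx_def)
    then obtain s where "s < e" "p \<le> t s"
      by (auto simp: not_less)
    moreover have "msupp_in (2 * e) (join_idx e i (unit_idx l))" "\<forall>x. join_idx e i (unit_idx l) x < p"
      using assms(6,7) \<open>1 < p\<close> by (auto simp: join_idx_def unit_idx_def small_idx_def msupp_in_def)
    ultimately show ?thesis
      unfolding M_def using assms(1-3,5) by (intro tmonprod_coeff_eq_0) auto
  qed
  define S where "S = {t. trunc_idx p m e t \<and> D t r * M t \<noteq> 0}"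
  have "D (unit_idx l) (D i r) = (\<Sum>t\<in>S. D t r * M t)"
    using assms(4) trunc_idx_small_idx[OF assms(3,7)] trunc_idx_unit_idx[OF assms(3) \<open>1 < p\<close> assms(6)]
    unfolding F_derivation_def S_def M_def by blast
  also have "\<dots> = (\<Sum>t\<in>small_idx p e. D t r * M t)"
    using M0 trunc_idx_small_idx[OF assms(3)] small_idx_finite_card(1)
    by (intro sum.mono_neutral_left) (auto simp: S_def)
  finally show "D (unit_idx l) (D i r) = (\<Sum>t\<in>small_idx p e. M t * D t r)"
    by (simp add: mult.commute)
qed

theorem lemma2p19:
  fixes k :: "'a::field set" and p e :: nat and m :: enat
    and \<Phi> :: "nat \<Rightarrow> 'a mps" and D :: "(nat \<Rightarrow> nat) \<Rightarrow> 'a \<Rightarrow> 'a"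
  assumes "prime p" and "of_nat p = (0::'a)"
    and "is_subfield k"
    and "formal_group_law k e \<Phi>"
    and "m > 0"
    and "hs_derivation p m e k D"
    and "F_derivation p m e (Phi_trunc p m e \<Phi>) D"
  shows "field_degree_le (constants e D) (p ^ e)"
proof -
  let ?\<Delta> = "(\<lambda>l. D (unit_idx l)) ` {..<e}"
  have "1 < p" using assms(1) prime_gt_1_nat by blast
  have "field_degree_le {r. \<forall>d\<in>?\<Delta>. d r = 0} (card (small_idx p e))"
  proof (rule field_degree_le_if_derivation_closed)
    show "\<forall>d\<in>?\<Delta>. derivation d"
      using hs_derivation_unit_idx[OF assms(6,5) \<open>1 < p\<close>] by blast
    show "(\<lambda>_. 0) \<in> small_idx p e" using \<open>1 < p\<close> by (simp add: zero_in_small_idx)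
    show "D (\<lambda>_. 0) = (\<lambda>r. r)" using assms(6) by (simp add: hs_derivation_def fun_eq_iff)
    show "\<And>d i. d \<in> ?\<Delta> \<Longrightarrow> i \<in> small_idx p e \<Longrightarrow> \<exists>M. \<forall>r. d (D i r) = (\<Sum>t\<in>small_idx p e. M t * D t r)"
      using F_derivation_unit_idx_closed[OF assms(1,2,5,7)] Phi_trunc_const_eq_0[OF assms(4)] by blast
  qed (rule small_idx_finite_card(1))
  moreover have "constants e D = {r. \<forall>d\<in>?\<Delta>. d r = 0}"
    by (auto simp: constants_def unit_idx_def)
  ultimately show ?thesis
    using small_idx_finite_card(2) field_degree_le_mono by metis
qed

end
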